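(* Let $A\in\mathbb R^{d\times d}$ be symmetric positive definite with all eigenvalues in $[\Lambda_{\min,\Theta},\Lambda_{\max,\Theta}]$ for some $0<\Lambda_{\min,\Theta}\le\Lambda_{\max,\Theta}<\infty$, let $\nu>0$, and let $K_\nu(r)=\frac{2^{1-\nu}}{\Gamma(\nu)}\,\big(\sqrt{r^\top Ar}\big)^{\nu}\,\mathfrak K_\nu\big(\sqrt{r^\top Ar}\big)$, $r\in\mathbb R^d$, be the geometric anisotropic Matérn correlation function, where $\mathfrak K_\nu$ is the modified Bessel function of the second kind. Then for all $\beta\in\mathbb N$ and $m\in\mathbb N$ there is a finite constant $C_{\beta,A}$ such that $$\Big|\frac{\partial^m}{\partial\nu^m}K_\nu(r)\Big|\le\frac{C_{\beta,A}}{1+\|r\|_2^{2\beta}}\quad\text{for all } r\in\mathbb R^d.$$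
   Context: $\Gamma$ denotes the Gamma function. *)

theory Defs
  imports "HOL-Analysis.Analysis"
begin

text \<open>Modified Bessel function of the second kind, via its standard integral
  representation, valid for x > 0.\<close>
definition besselK :: "real \<Rightarrow> real \<Rightarrow> real" where
  "besselK nu x = integral {0..} (\<lambda>t. exp (- x * cosh t) * cosh (nu * t))"

definition is_eigenvalue :: "real^'d^'d \<Rightarrow> real \<Rightarrow> bool" where
  "is_eigenvalue A l \<longleftrightarrow> (\<exists>v. v \<noteq> 0 \<and> A *v v = l *\<^sub>R v)"

definition pos_def :: "real^'d^'d \<Rightarrow> bool" where
  "pos_def A \<longleftrightarrow> (\<forall>x. x \<noteq> 0 \<longrightarrow> x \<bullet> (A *v x) > 0)"

text \<open>Geometric anisotropic Matern correlation function; at r = 0 it takes its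
  limiting value 1.\<close>
definition matern :: "real^'d^'d \<Rightarrow> real \<Rightarrow> real^'d \<Rightarrow> real" where
  "matern A nu r =
     (if r = 0 then 1
      else (let s = sqrt (r \<bullet> (A *v r)) in
            2 powr (1 - nu) / Gamma nu * s powr nu * besselK nu s))"

end

theory Submission
  imports Defs "HOL-Complex_Analysis.Complex_Analysis"
begin

text \<open>Substituting \<open>w = t + ln (s/2)\<close> in the integral defining \<open>besselK\<close> shows that
  \<open>2 powr (1 - v) * s powr v * besselK v s\<close> is the integral over the real line of
  \<open>exp (v * w - exp w - s\<^sup>2/4 * exp (- w))\<close>. This integral still converges for complex \<open>v\<close>
  with positive real part and is holomorphic there, and since \<open>exp w + s\<^sup>2/4 * exp (- w) \<ge> s\<close>
  it is bounded by \<open>C * exp (- s/2)\<close> on the disc of radius \<open>\<nu>/2\<close> around \<open>\<nu>\<close>. Multiplied by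
  the entire function \<open>rGamma = 1/\<Gamma>\<close> it extends the Matern function holomorphically in \<open>\<nu>\<close>,
  so Cauchy's inequality bounds every \<open>\<nu>\<close>-derivative by \<open>C\<^sub>m * exp (- s/2)\<close>, uniformly in
  \<open>s = sqrt (r \<bullet> (A *v r))\<close>. Positive definiteness gives \<open>s \<ge> sqrt \<mu> * norm r\<close> for some
  \<open>\<mu> > 0\<close>, and exponential decay in \<open>norm r\<close> beats every polynomial.\<close>

lemma integrable_exp_neg_abs:
  fixes c :: real
  assumes "c > 0"
  shows "(\<lambda>w::real. exp (- c * \<bar>w\<bar>)) integrable_on UNIV"
proof -
  define f where "f = (\<lambda>w::real. exp (- c * \<bar>w\<bar>))"
  have "(\<lambda>w::real. exp (- c * w)) integrable_on {0..}"
    using integrable_on_exp_minus_to_infinity[OF assms, of 0] by simp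
  then have "f integrable_on {0..}"
    by (rule integrable_eq) (simp add: f_def)
  then have pos: "f absolutely_integrable_on {0..}"
    by (rule nonnegative_absolutely_integrable_1) (simp add: f_def)
  moreover have "(\<lambda>x. f (-x)) = f"
    by (simp add: f_def fun_eq_iff)
  ultimately have neg: "f absolutely_integrable_on {..0}"
    using has_absolute_integral_reflect_real[of "{..0}" "{0..}" f] by auto
  have "f absolutely_integrable_on ({0..} \<union> {..0})"
    using pos neg by (rule set_integrable_Un) auto
  moreover have "{0..} \<union> {..0::real} = UNIV"
    by auto
  ultimately show ?thesis
    unfolding f_def using set_lebesgue_integral_eq_integral(1) by fastforce
qed

lemma
  fixes f :: "real \<Rightarrow> real"
  assumes "f absolutely_integrable_on UNIV"
  shows absolutely_integrable_translate_real: "(\<lambda>t. f (t + c)) absolutely_integrable_on UNIV"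
    and integral_translate_real: "integral UNIV (\<lambda>t. f (t + c)) = integral UNIV f"
proof -
  have "range (\<lambda>t. t + c) = UNIV"
    by (metis surj_def diff_add_cancel)
  moreover have "((\<lambda>t. t + c) has_field_derivative 1) (at t within UNIV)" for t
    by (auto intro!: derivative_eq_intros)
  ultimately have "(\<lambda>t. \<bar>1\<bar> * f (t + c)) absolutely_integrable_on UNIV \<and>
      integral UNIV (\<lambda>t. \<bar>1\<bar> * f (t + c)) = integral UNIV f"
    using has_absolute_integral_change_of_variables_1'[of UNIV "\<lambda>t. t + c" "\<lambda>_. 1" f]
      assms by simp
  then show "(\<lambda>t. f (t + c)) absolutely_integrable_on UNIV"
    and "integral UNIV (\<lambda>t. f (t + c)) = integral UNIV f"
    by simp_all
qed

lemma integral_nonneg_even_part: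
  fixes f :: "real \<Rightarrow> real"
  assumes f: "f absolutely_integrable_on UNIV"
  shows "integral {0..} (\<lambda>t. f t + f (- t)) = integral UNIV f"
proof -
  have pos: "f absolutely_integrable_on {0..}" and neg: "f absolutely_integrable_on {..0}"
    by (rule set_integrable_subset[OF f]; simp)+
  have reflect: "(\<lambda>t. f (- t)) absolutely_integrable_on {0..} \<and>
      integral {0..} (\<lambda>t. f (- t)) = integral {..0} f"
    by (subst has_absolute_integral_reflect_real) (use neg in auto)
  have "{0..} \<inter> {..0::real} = {0}"
    by auto
  then have "(f has_integral (integral {0..} f + integral {..0} f)) ({0..} \<union> {..0})"
    using pos neg
    by (intro has_integral_Un integrable_integral set_lebesgue_integral_eq_integral(1)) auto
  moreover have "{0..} \<union> {..0::real} = UNIV"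
    by auto
  ultimately have "integral UNIV f = integral {0..} f + integral {..0} f"
    by (simp add: integral_unique)
  also have "\<dots> = integral {0..} (\<lambda>t. f t + f (- t))"
    using reflect pos by (simp add: integral_add set_lebesgue_integral_eq_integral(1))
  finally show ?thesis
    by simp
qed

lemma
  fixes g :: "real \<Rightarrow> 'a::euclidean_space"
  assumes "g integrable_on UNIV" "g integrable_on {a..b}"
  shows integrable_outside_Icc: "(\<lambda>w. if w \<in> {a..b} then 0 else g w) integrable_on UNIV"
    and integral_outside_Icc:
      "integral UNIV (\<lambda>w. if w \<in> {a..b} then 0 else g w) = integral UNIV g - integral {a..b} g"
proof -
  let ?inside = "\<lambda>w. if w \<in> {a..b} then g w else 0"
  have inside: "?inside integrable_on UNIV" "integral UNIV ?inside = integral {a..b} g"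
    using assms(2) by (simp_all only: integrable_restrict_UNIV integral_restrict_UNIV)
  have "(\<lambda>w. if w \<in> {a..b} then 0 else g w) = (\<lambda>w. g w - ?inside w)"
    by auto
  then show "(\<lambda>w. if w \<in> {a..b} then 0 else g w) integrable_on UNIV"
    and "integral UNIV (\<lambda>w. if w \<in> {a..b} then 0 else g w) = integral UNIV g - integral {a..b} g"
    using integrable_diff[OF assms(1) inside(1)] integral_diff[OF assms(1) inside(1)] inside(2)
    by simp_all
qed

lemma integrable_on_Icc_nonneg:
  fixes M :: "real \<Rightarrow> real"
  assumes "M integrable_on UNIV" "\<And>w. 0 \<le> M w"
  shows "M integrable_on {a..b}"
  using absolutely_integrable_on_subcbox[OF nonnegative_absolutely_integrable_1[OF assms]]
  by (simp add: set_lebesgue_integral_eq_integral(1))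

lemma tendsto_integral_outside_Icc:
  fixes M :: "real \<Rightarrow> real"
  assumes M: "M integrable_on UNIV" "\<And>w. 0 \<le> M w"
  shows "(\<lambda>n. integral UNIV (\<lambda>w. if w \<in> {-real n..real n} then 0 else M w)) \<longlonglongrightarrow> 0"
proof -
  let ?M_tail = "\<lambda>n w. if w \<in> {-real n..real n} then 0 else M w"
  have M_tail_integrable: "?M_tail n integrable_on UNIV" for n
    using M(1) integrable_on_Icc_nonneg[OF M] by (rule integrable_outside_Icc)
  have M_tail_eventually_0: "(\<lambda>n. ?M_tail n w) \<longlonglongrightarrow> 0" for w
  proof (rule tendsto_eventually, rule eventually_sequentiallyI)
    fix n assume "nat \<lceil>\<bar>w\<bar>\<rceil> \<le> n"
    then show "?M_tail n w = 0"
      by auto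
  qed
  have "(\<lambda>n. integral UNIV (?M_tail n)) \<longlonglongrightarrow> integral UNIV (\<lambda>w. 0::real)"
    using dominated_convergence(2)[OF M_tail_integrable M(1) _ M_tail_eventually_0] M(2) by simp
  then show ?thesis
    by simp
qed

lemma uniform_limit_integral_Icc_UNIV:
  fixes f :: "'a \<Rightarrow> real \<Rightarrow> 'b::euclidean_space"
  assumes cont: "\<And>z. z \<in> S \<Longrightarrow> continuous_on UNIV (f z)"
    and M: "M integrable_on UNIV" "\<And>w. 0 \<le> M w"
    and bound: "\<And>z w. z \<in> S \<Longrightarrow> norm (f z w) \<le> M w"
  shows "uniform_limit S (\<lambda>n z. integral {-real n..real n} (f z)) (\<lambda>z. integral UNIV (f z))
           sequentially"
proof (rule uniform_limitI)
  let ?M_tail = "\<lambda>n w. if w \<in> {-real n..real n} then 0 else M w"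
  have M_Icc: "M integrable_on {-real n..real n}" for n
    using M by (rule integrable_on_Icc_nonneg)
  fix e :: real
  assume "e > 0"
  with tendsto_integral_outside_Icc[OF M]
  have "\<forall>\<^sub>F n in sequentially. integral UNIV (?M_tail n) < e"
    by (rule order_tendstoD(2))
  then show "\<forall>\<^sub>F n in sequentially. \<forall>z\<in>S.
      dist (integral {-real n..real n} (f z)) (integral UNIV (f z)) < e"
  proof eventually_elim
    case (elim n)
    show ?case
    proof
      fix z assume z: "z \<in> S"
      have f_UNIV: "f z integrable_on UNIV"
        using bound[OF z]
        by (intro measurable_bounded_by_integrable_imp_integrable[OF _ M(1)]
              continuous_imp_measurable_on_sets_lebesgue cont[OF z]) auto
      have f_Icc: "f z integrable_on {-real n..real n}"
        by (rule integrable_continuous_real, rule continuous_on_subset[OF cont[OF z]]) simp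
      have "norm (integral UNIV (f z) - integral {-real n..real n} (f z)) \<le> integral UNIV (?M_tail n)"
        unfolding integral_outside_Icc[OF f_UNIV f_Icc, symmetric]
        using integrable_outside_Icc[OF f_UNIV f_Icc] integrable_outside_Icc[OF M(1) M_Icc] bound[OF z]
        by (intro integral_norm_bound_integral) auto
      then show "dist (integral {-real n..real n} (f z)) (integral UNIV (f z)) < e"
        using elim by (simp add: dist_norm norm_minus_commute)
    qed
  qed
qed

lemma
  fixes f f' :: "complex \<Rightarrow> real \<Rightarrow> complex"
  assumes f': "\<And>z t. ((\<lambda>z. f z t) has_field_derivative f' z t) (at z)"
    and cont_f': "continuous_on UNIV (\<lambda>(z, t). f' z t)"
    and cont_f: "\<And>z. continuous_on UNIV (f z)"
    and M: "M integrable_on UNIV" "\<And>w. 0 \<le> M w"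
    and bound: "\<And>z w. z \<in> cball c r \<Longrightarrow> norm (f z w) \<le> M w"
  shows continuous_on_integral_UNIV: "continuous_on (cball c r) (\<lambda>z. integral UNIV (f z))"
    and holomorphic_on_integral_UNIV: "(\<lambda>z. integral UNIV (f z)) holomorphic_on ball c r"
proof -
  have holo_Icc: "(\<lambda>z. integral {-real n..real n} (f z)) holomorphic_on UNIV" for n
  proof -
    have "(\<lambda>z. integral (cbox (-real n) (real n)) (f z)) holomorphic_on UNIV"
    proof (rule leibniz_rule_holomorphic[where fx = f'])
      show "f z integrable_on cbox (-real n) (real n)" for z
        by (rule integrable_continuous, rule continuous_on_subset[OF cont_f]) simp
      show "continuous_on (UNIV \<times> cbox (-real n) (real n)) (\<lambda>(z, t). f' z t)"
        by (rule continuous_on_subset[OF cont_f']) simp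
    qed (use f' in auto)
    then show ?thesis
      by simp
  qed
  have approx: "\<forall>\<^sub>F n in sequentially.
      continuous_on (cball c r) (\<lambda>z. integral {-real n..real n} (f z)) \<and>
      (\<lambda>z. integral {-real n..real n} (f z)) holomorphic_on ball c r"
    using holo_Icc
    by (intro always_eventually allI conjI holomorphic_on_imp_continuous_on)
      (auto intro: holomorphic_on_subset)
  have limit: "uniform_limit (cball c r) (\<lambda>n z. integral {-real n..real n} (f z))
      (\<lambda>z. integral UNIV (f z)) sequentially"
    using cont_f M bound by (rule uniform_limit_integral_Icc_UNIV)
  from holomorphic_uniform_limit[OF approx limit trivial_limit_sequentially]
  show "continuous_on (cball c r) (\<lambda>z. integral UNIV (f z))"
    and "(\<lambda>z. integral UNIV (f z)) holomorphic_on ball c r"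
    by blast+
qed

lemma higher_deriv_real_eq_Re:
  fixes F :: "complex \<Rightarrow> complex" and f :: "real \<Rightarrow> real"
  assumes F: "F holomorphic_on S" "open S"
    and J: "open J" "\<And>x. x \<in> J \<Longrightarrow> complex_of_real x \<in> S"
    and eq: "\<And>x. x \<in> J \<Longrightarrow> f x = Re (F (of_real x))"
    and x: "x \<in> J"
  shows "(deriv ^^ m) f x = Re ((deriv ^^ m) F (of_real x))"
  using x
proof (induction m arbitrary: x)
  case 0
  then show ?case
    using eq by simp
next
  case (Suc m)
  have "((deriv ^^ m) F has_field_derivative (deriv ^^ Suc m) F (of_real x)) (at (of_real x))"
    using F J(2)[OF Suc.prems] by (rule has_field_derivative_higher_deriv)
  then have "((\<lambda>y. Re ((deriv ^^ m) F (of_real y))) has_field_derivative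
      Re ((deriv ^^ Suc m) F (of_real x))) (at x)"
    by (intro has_field_derivative_Re has_vector_derivative_real_field)
  then have "((deriv ^^ m) f has_field_derivative Re ((deriv ^^ Suc m) F (of_real x))) (at x)"
    by (rule has_field_derivative_transform_within_open[OF _ J(1) Suc.prems]) (simp add: Suc.IH)
  then show ?case
    by (simp add: DERIV_imp_deriv)
qed

lemma pos_def_quadratic_form_ge:
  fixes A :: "real^'d^'d"
  assumes "pos_def A"
  obtains mu where "mu > 0" "\<And>r. mu * norm r ^ 2 \<le> r \<bullet> (A *v r)"
proof -
  have "continuous_on (sphere 0 1) (\<lambda>x. x \<bullet> (A *v x))"
    by (intro continuous_intros)
  from continuous_attains_inf[OF compact_sphere _ this]
  obtain x0 :: "real^'d" where x0: "x0 \<in> sphere 0 1"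
    and min: "\<And>y. y \<in> sphere 0 1 \<Longrightarrow> x0 \<bullet> (A *v x0) \<le> y \<bullet> (A *v y)"
    by auto
  have "x0 \<noteq> 0"
    using x0 by auto
  then have "x0 \<bullet> (A *v x0) > 0"
    using assms by (simp add: pos_def_def)
  then show ?thesis
  proof (rule that)
    fix r :: "real^'d"
    show "x0 \<bullet> (A *v x0) * norm r ^ 2 \<le> r \<bullet> (A *v r)"
    proof (cases "r = 0")
      case False
      define u where "u = r /\<^sub>R norm r"
      have "u \<in> sphere 0 1" and r: "r = norm r *\<^sub>R u"
        using False by (simp_all add: u_def)
      then have "norm r ^ 2 * (x0 \<bullet> (A *v x0)) \<le> norm r ^ 2 * (u \<bullet> (A *v u))"
        by (intro mult_left_mono min) auto
      also have "\<dots> = (norm r *\<^sub>R u) \<bullet> (A *v (norm r *\<^sub>R u))"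
        by (simp add: matrix_vector_mult_scaleR power2_eq_square)
      also have "\<dots> = r \<bullet> (A *v r)"
        by (simp only: r[symmetric])
      finally show ?thesis
        by (simp add: mult.commute)
    qed simp
  qed
qed

lemma exp_neg_le_poly_decay:
  fixes k t :: real and n :: nat
  assumes "k > 0" "t \<ge> 0"
  shows "exp (- k * t) \<le> (1 + (real n / k) ^ n) / (1 + t ^ n)"
proof -
  have power_le: "t ^ n \<le> (real n / k) ^ n * exp (k * t)"
  proof (cases "n = 0")
    case False
    have kt: "0 \<le> k * t"
      using assms by simp
    have "(k * t / real n) ^ n \<le> (1 + k * t / real n) ^ n"
      using kt by (intro power_mono) auto
    also have "\<dots> \<le> exp (k * t)"
      using False kt by (intro exp_ge_one_plus_x_over_n_power_n) simp_all
    finally have "(real n / k) ^ n * (k * t / real n) ^ n \<le> (real n / k) ^ n * exp (k * t)"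
      using assms by (intro mult_left_mono) auto
    moreover have "(real n / k) ^ n * (k * t / real n) ^ n = t ^ n"
      using False assms by (simp add: power_mult_distrib[symmetric])
    ultimately show ?thesis
      by simp
  qed (use assms in simp)
  have "(1 + t ^ n) * exp (- k * t) = exp (- k * t) + t ^ n * exp (- k * t)"
    by (simp add: algebra_simps)
  also have "\<dots> \<le> 1 + (real n / k) ^ n * exp (k * t) * exp (- k * t)"
    using assms power_le by (intro add_mono mult_right_mono) auto
  also have "\<dots> = 1 + (real n / k) ^ n"
    by (simp add: mult.assoc flip: exp_add)
  finally have "(1 + t ^ n) * exp (- k * t) \<le> 1 + (real n / k) ^ n" .
  moreover have "0 < 1 + t ^ n"
    using assms by (simp add: add_pos_nonneg)
  ultimately show ?thesis
    by (simp add: pos_le_divide_eq mult.commute)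
qed

lemma exp_add_exp_neg_ge:
  fixes s w :: real
  shows "s \<le> exp w + s^2/4 * exp (- w)"
proof -
  have "exp w + s^2/4 * exp (- w) - s = (exp w - s/2)^2 / exp w"
    by (simp add: exp_minus field_simps power2_eq_square)
  also have "\<dots> \<ge> 0"
    by simp
  finally show ?thesis
    by simp
qed

lemma linear_minus_half_exp_le:
  fixes a b x w :: real
  assumes "0 < a" "a \<le> x" "x \<le> b"
  shows "x * w - exp w / 2 \<le> (b + 1)^2 - min a 1 * \<bar>w\<bar>"
proof (cases "w \<ge> 0")
  case True
  have "w^2/4 \<le> exp w / 2"
    using exp_lower_Taylor_quadratic[OF True] True by (simp add: power2_eq_square)
  moreover have "x * w \<le> b * w"
    using True assms by (simp add: mult_right_mono)
  moreover have "(b + 1) * w \<le> w^2/4 + (b + 1)^2"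
    using zero_le_power2[of "w/2 - (b + 1)"] by (simp add: power2_eq_square algebra_simps)
  moreover have "min a 1 * w \<le> w"
    using True mult_right_mono[of "min a 1" 1 w] by simp
  ultimately show ?thesis
    using True by (simp add: algebra_simps)
next
  case False
  then have "x * w \<le> min a 1 * w"
    using assms by (intro mult_right_mono_neg) auto
  moreover have "min a 1 * \<bar>w\<bar> = - (min a 1 * w)"
    using False by simp
  ultimately show ?thesis
    using exp_ge_zero[of w] zero_le_power2[of "b + 1"] by linarith
qed

lemma besselK_exponent_le:
  fixes a b x w s :: real
  assumes "0 < a" "a \<le> x" "x \<le> b"
  shows "x * w - exp w - s^2/4 * exp (- w) \<le> - s/2 + (b + 1)^2 - min a 1 * \<bar>w\<bar>"
proof -
  have "0 \<le> s^2/4 * exp (- w)"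
    by simp
  then show ?thesis
    using exp_add_exp_neg_ge[of s w] linear_minus_half_exp_le[OF assms, of w] by linarith
qed

lemma besselK_exponent_shift:
  fixes s v t :: real
  assumes "s > 0"
  shows "v * (t + ln (s/2)) - exp (t + ln (s/2)) - s^2/4 * exp (- (t + ln (s/2)))
           = v * ln (s/2) + (v * t - s * cosh t)"
proof -
  have "exp (t + ln (s/2)) = exp t * (s/2)" "exp (- (t + ln (s/2))) = exp (- t) * (2/s)"
    using assms by (simp_all add: exp_add exp_diff exp_minus field_simps)
  then show ?thesis
    using assms by (simp add: cosh_def field_simps power2_eq_square)
qed

definition besselK_integrand :: "real \<Rightarrow> complex \<Rightarrow> real \<Rightarrow> complex" where
  "besselK_integrand s z w = exp (z * of_real w - of_real (exp w + s^2/4 * exp (- w)))"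

definition besselK_integral :: "real \<Rightarrow> complex \<Rightarrow> complex" where
  "besselK_integral s z = integral UNIV (besselK_integrand s z)"

lemma norm_besselK_integrand_le:
  assumes "nu > 0" "z \<in> cball (of_real nu) (nu/2)"
  shows "norm (besselK_integrand s z w)
           \<le> exp (- s/2) * (exp ((3*nu/2 + 1)^2) * exp (- min (nu/2) 1 * \<bar>w\<bar>))"
proof -
  have "\<bar>Re (of_real nu - z)\<bar> \<le> nu/2"
    using assms(2) abs_Re_le_cmod[of "of_real nu - z"] by (simp add: dist_norm)
  then have "nu/2 \<le> Re z" "Re z \<le> 3*nu/2"
    unfolding abs_le_iff by auto
  then have "Re z * w - exp w - s^2/4 * exp (- w)
      \<le> - s/2 + (3*nu/2 + 1)^2 - min (nu/2) 1 * \<bar>w\<bar>"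
    using assms(1) by (intro besselK_exponent_le) auto
  then show ?thesis
    by (simp add: besselK_integrand_def norm_exp_eq_Re flip: exp_add)
qed

lemma integrable_besselK_majorant:
  fixes nu s :: real
  assumes "nu > 0"
  shows "(\<lambda>w. exp (- s/2) * (exp ((3*nu/2 + 1)^2) * exp (- min (nu/2) 1 * \<bar>w\<bar>)))
           integrable_on UNIV"
  using assms by (intro integrable_on_mult_right integrable_exp_neg_abs) auto

lemma
  assumes "nu > 0"
  shows continuous_on_besselK_integral: "continuous_on (cball (of_real nu) (nu/2)) (besselK_integral s)"
    and holomorphic_on_besselK_integral: "besselK_integral s holomorphic_on ball (of_real nu) (nu/2)"
proof -
  have derivative: "((\<lambda>z. besselK_integrand s z t) has_field_derivative
      of_real t * besselK_integrand s z t) (at z)" for z t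
    unfolding besselK_integrand_def by (auto intro!: derivative_eq_intros)
  have continuous_derivative: "continuous_on UNIV (\<lambda>(z, t). of_real t * besselK_integrand s z t)"
    unfolding besselK_integrand_def by (auto simp: case_prod_beta intro!: continuous_intros)
  have continuous: "continuous_on UNIV (besselK_integrand s z)" for z
    unfolding besselK_integrand_def by (intro continuous_intros)
  note integral_UNIV = continuous_on_integral_UNIV holomorphic_on_integral_UNIV
  from integral_UNIV[OF derivative continuous_derivative continuous integrable_besselK_majorant[OF assms] _
      norm_besselK_integrand_le[OF assms]]
  show "continuous_on (cball (of_real nu) (nu/2)) (besselK_integral s)"
    and "besselK_integral s holomorphic_on ball (of_real nu) (nu/2)"
    unfolding besselK_integral_def by simp_all
qed

lemma norm_besselK_integral_le:
  assumes "nu > 0" "z \<in> cball (of_real nu) (nu/2)"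
  shows "norm (besselK_integral s z)
           \<le> exp (- s/2) * (exp ((3*nu/2 + 1)^2) * integral UNIV (\<lambda>w. exp (- min (nu/2) 1 * \<bar>w\<bar>)))"
proof -
  have "besselK_integrand s z integrable_on UNIV"
    using norm_besselK_integrand_le[OF assms]
    by (intro measurable_bounded_by_integrable_imp_integrable[OF _ integrable_besselK_majorant[OF assms(1)]]
          continuous_imp_measurable_on_sets_lebesgue)
      (auto simp: besselK_integrand_def intro!: continuous_intros)
  then have "norm (besselK_integral s z) \<le> integral UNIV
      (\<lambda>w. exp (- s/2) * (exp ((3*nu/2 + 1)^2) * exp (- min (nu/2) 1 * \<bar>w\<bar>)))"
    unfolding besselK_integral_def
    using integrable_besselK_majorant[OF assms(1)] norm_besselK_integrand_le[OF assms]
    by (rule integral_norm_bound_integral)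
  then show ?thesis
    by simp
qed

lemma absolutely_integrable_besselK_exponent:
  fixes v s :: real
  assumes v: "v > 0"
  shows "(\<lambda>w. exp (v * w - exp w - s^2/4 * exp (- w))) absolutely_integrable_on UNIV"
proof (rule measurable_bounded_by_integrable_imp_absolutely_integrable)
  show "(\<lambda>w. exp (v * w - exp w - s^2/4 * exp (- w))) \<in> borel_measurable (lebesgue_on UNIV)"
    by (intro continuous_imp_measurable_on_sets_lebesgue continuous_intros) auto
  show "norm (exp (v * w - exp w - s^2/4 * exp (- w)))
      \<le> exp (- s/2) * (exp ((3 * v / 2 + 1)^2) * exp (- min (v/2) 1 * \<bar>w\<bar>))" for w
    using norm_besselK_integrand_le[OF v, of "of_real v" s w] v
    by (simp add: besselK_integrand_def norm_exp_eq_Re diff_diff_eq)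
qed (use integrable_besselK_majorant[OF v] in auto)

lemma integral_besselK_exponent:
  fixes v s :: real
  assumes v: "v > 0" and s: "s > 0"
  shows "integral UNIV (\<lambda>w. exp (v * w - exp w - s^2/4 * exp (- w)))
           = 2 powr (1 - v) * s powr v * besselK v s"
proof -
  define \<psi> where "\<psi> = (\<lambda>w. exp (v * w - exp w - s^2/4 * exp (- w)))"
  define \<phi> where "\<phi> t = exp (v * t - s * cosh t)" for t
  define P where "P = (s/2) powr v"
  have \<psi>_integrable: "\<psi> absolutely_integrable_on UNIV"
    unfolding \<psi>_def using v by (rule absolutely_integrable_besselK_exponent)
  have "\<psi> (t + ln (s/2)) = P * \<phi> t" for t
    using besselK_exponent_shift[OF s, of v t] s
    by (simp add: \<psi>_def \<phi>_def P_def powr_def exp_add mult.commute)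
  with \<psi>_integrable have \<phi>_integrable: "\<phi> absolutely_integrable_on UNIV"
    and \<phi>_integral: "P * integral UNIV \<phi> = integral UNIV \<psi>"
    using absolutely_integrable_translate_real[of \<psi> "ln (s/2)"]
      integral_translate_real[of \<psi> "ln (s/2)"] s
    by (auto simp: P_def set_integrable_mult_right_iff)
  have "\<phi> t + \<phi> (- t) = 2 * (exp (- s * cosh t) * cosh (v * t))" for t
  proof -
    have "\<phi> t = exp (v * t) * exp (- s * cosh t)" "\<phi> (- t) = exp (- (v * t)) * exp (- s * cosh t)"
      by (simp_all add: \<phi>_def flip: exp_add)
    then show ?thesis
      by (simp add: cosh_def algebra_simps)
  qed
  then have "2 * besselK v s = integral {0..} (\<lambda>t. \<phi> t + \<phi> (- t))"
    by (simp add: besselK_def flip: integral_mult_right)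
  also have "\<dots> = integral UNIV \<phi>"
    using \<phi>_integrable by (rule integral_nonneg_even_part)
  finally have "integral UNIV \<psi> = 2 * P * besselK v s"
    using \<phi>_integral by (metis mult.assoc mult.commute)
  also have "2 * P = 2 powr (1 - v) * s powr v"
    using s by (simp add: P_def powr_divide powr_diff)
  finally show ?thesis
    unfolding \<psi>_def .
qed

lemma besselK_integral_of_real:
  fixes v s :: real
  assumes "v > 0" "s > 0"
  shows "besselK_integral s (of_real v) = of_real (2 powr (1 - v) * s powr v * besselK v s)"
proof -
  let ?\<psi> = "\<lambda>w. exp (v * w - exp w - s^2/4 * exp (- w))"
  have "besselK_integrand s (of_real v) = (\<lambda>w. of_real (?\<psi> w))"
    by (simp add: fun_eq_iff besselK_integrand_def diff_diff_eq flip: exp_of_real)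
  moreover have "?\<psi> integrable_on UNIV"
    using absolutely_integrable_besselK_exponent[OF assms(1)]
    by (rule set_lebesgue_integral_eq_integral(1))
  then have "((\<lambda>w. complex_of_real (?\<psi> w)) has_integral of_real (integral UNIV ?\<psi>)) UNIV"
    by (intro has_integral_of_real integrable_integral)
  ultimately show ?thesis
    unfolding besselK_integral_def integral_besselK_exponent[OF assms] by (simp add: integral_unique)
qed

definition matern_radial :: "real \<Rightarrow> real \<Rightarrow> real" where
  "matern_radial nu s = 2 powr (1 - nu) / Gamma nu * s powr nu * besselK nu s"

lemma matern_radial_eq_Re:
  assumes "v > 0" "s > 0"
  shows "matern_radial v s = Re (rGamma (of_real v) * besselK_integral s (of_real v))"
  unfolding besselK_integral_of_real[OF assms] rGamma_complex_of_real of_real_mult[symmetric]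
    Re_complex_of_real
  by (simp add: matern_radial_def rGamma_inverse_Gamma divide_inverse ac_simps)

lemma norm_rGamma_besselK_integral_le:
  assumes nu: "nu > 0"
  obtains K where "K \<ge> 0"
    "\<And>s (z :: complex). z \<in> cball (of_real nu) (nu/2) \<Longrightarrow>
       norm (rGamma z * besselK_integral s z) \<le> K * exp (- s/2)"
proof -
  have "compact (rGamma ` cball (of_real nu :: complex) (nu/2))"
    by (intro compact_continuous_image continuous_on_rGamma compact_cball)
  then obtain R where R: "R > 0"
    "\<And>z :: complex. z \<in> cball (of_real nu) (nu/2) \<Longrightarrow> norm (rGamma z) \<le> R"
    by (auto dest!: compact_imp_bounded simp: bounded_pos)
  define I where "I = exp ((3*nu/2 + 1)^2) * integral UNIV (\<lambda>w. exp (- min (nu/2) 1 * \<bar>w\<bar>))"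
  have "0 \<le> integral UNIV (\<lambda>w. exp (- min (nu/2) 1 * \<bar>w\<bar>))"
    using nu by (intro integral_nonneg integrable_exp_neg_abs) auto
  then have "I \<ge> 0"
    by (simp add: I_def)
  show ?thesis
  proof (rule that[of "R * I"])
    show "R * I \<ge> 0"
      using R(1) \<open>I \<ge> 0\<close> by simp
    fix s and z :: complex
    assume "z \<in> cball (of_real nu) (nu/2)"
    then have "norm (rGamma z) * norm (besselK_integral s z) \<le> R * (exp (- s/2) * I)"
      using R norm_besselK_integral_le[OF nu, of z s] by (intro mult_mono) (auto simp: I_def)
    then show "norm (rGamma z * besselK_integral s z) \<le> R * I * exp (- s/2)"
      by (simp add: norm_mult ac_simps)
  qed
qed

lemma higher_deriv_matern_radial_le:
  assumes nu: "nu > 0"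
  obtains B where "B \<ge> 0"
    "\<And>s. s > 0 \<Longrightarrow> \<bar>(deriv ^^ m) (\<lambda>v. matern_radial v s) nu\<bar> \<le> B * exp (- s/2)"
proof -
  obtain K where K: "K \<ge> 0"
    "\<And>s (z :: complex). z \<in> cball (of_real nu) (nu/2) \<Longrightarrow>
       norm (rGamma z * besselK_integral s z) \<le> K * exp (- s/2)"
    using norm_rGamma_besselK_integral_le[OF nu] by blast
  define \<rho> where "\<rho> = nu/2"
  have \<rho>: "\<rho> > 0"
    using nu by (simp add: \<rho>_def)
  show ?thesis
  proof (rule that[of "fact m * K / \<rho> ^ m"])
    show "fact m * K / \<rho> ^ m \<ge> 0"
      using K(1) \<rho> by simp
    fix s :: real
    assume s: "s > 0"
    define \<Phi> where "\<Phi> z = rGamma z * besselK_integral s z" for z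
    have holomorphic: "\<Phi> holomorphic_on ball (of_real nu) \<rho>"
      unfolding \<Phi>_def \<rho>_def using holomorphic_on_besselK_integral[OF nu]
      by (intro holomorphic_intros) auto
    moreover have "continuous_on (cball (of_real nu) \<rho>) \<Phi>"
      unfolding \<Phi>_def \<rho>_def using continuous_on_besselK_integral[OF nu]
      by (intro continuous_intros) auto
    ultimately have Cauchy: "norm ((deriv ^^ m) \<Phi> (of_real nu)) \<le> fact m * (K * exp (- s/2)) / \<rho> ^ m"
      using \<rho> K(2) by (intro Cauchy_inequality) (auto simp: \<Phi>_def \<rho>_def dist_norm)
    have "(deriv ^^ m) (\<lambda>v. matern_radial v s) nu = Re ((deriv ^^ m) \<Phi> (of_real nu))"
    proof (rule higher_deriv_real_eq_Re[OF holomorphic _ _ _ _ centre_in_ball[THEN iffD2, OF \<rho>]])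
      show "complex_of_real x \<in> ball (of_real nu) \<rho>" if "x \<in> ball nu \<rho>" for x
        using that by (simp add: dist_of_real)
      show "matern_radial x s = Re (\<Phi> (of_real x))" if "x \<in> ball nu \<rho>" for x
      proof -
        have "x > 0"
          using that unfolding mem_ball dist_real_def \<rho>_def abs_less_iff by auto
        then show ?thesis
          unfolding \<Phi>_def using s by (rule matern_radial_eq_Re)
      qed
    qed auto
    then show "\<bar>(deriv ^^ m) (\<lambda>v. matern_radial v s) nu\<bar> \<le> fact m * K / \<rho> ^ m * exp (- s/2)"
      using abs_Re_le_cmod[of "(deriv ^^ m) \<Phi> (of_real nu)"] Cauchy by (simp add: field_simps)
  qed
qed

lemma higher_deriv_matern_le_exp_norm:
  fixes A :: "real^'d^'d"
  assumes A: "pos_def A" and nu: "nu > 0"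
  obtains B k where "B \<ge> 0" "k > 0"
    "\<And>r. \<bar>(deriv ^^ m) (\<lambda>v. matern A v r) nu\<bar> \<le> B * exp (- k * norm r)"
proof -
  obtain mu where mu: "mu > 0" "\<And>r. mu * norm r ^ 2 \<le> r \<bullet> (A *v r)"
    using pos_def_quadratic_form_ge[OF A] by blast
  obtain B where B: "B \<ge> 0"
    "\<And>s. s > 0 \<Longrightarrow> \<bar>(deriv ^^ m) (\<lambda>v. matern_radial v s) nu\<bar> \<le> B * exp (- s/2)"
    using higher_deriv_matern_radial_le[OF nu] by blast
  show ?thesis
  proof (rule that[of "max 1 B" "sqrt mu / 2"])
    show "max 1 B \<ge> 0" "sqrt mu / 2 > 0"
      using mu(1) by simp_all
    fix r :: "real^'d"
    show "\<bar>(deriv ^^ m) (\<lambda>v. matern A v r) nu\<bar> \<le> max 1 B * exp (- (sqrt mu / 2) * norm r)"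
    proof (cases "r = 0")
      case True
      then show ?thesis
        by (simp add: matern_def le_max_iff_disj)
    next
      case False
      define s where "s = sqrt (r \<bullet> (A *v r))"
      have "s > 0"
        using A False by (simp add: s_def pos_def_def)
      have "sqrt mu * norm r \<le> s"
        using real_sqrt_le_mono[OF mu(2)[of r]] mu(1) by (simp add: s_def real_sqrt_mult)
      have "(\<lambda>v. matern A v r) = (\<lambda>v. matern_radial v s)"
        using False by (simp add: fun_eq_iff matern_def matern_radial_def s_def Let_def)
      then have "\<bar>(deriv ^^ m) (\<lambda>v. matern A v r) nu\<bar> \<le> B * exp (- s/2)"
        using B(2)[OF \<open>s > 0\<close>] by simp
      also have "\<dots> \<le> max 1 B * exp (- (sqrt mu / 2) * norm r)"
        using \<open>sqrt mu * norm r \<le> s\<close> B(1) by (intro mult_mono) auto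
      finally show ?thesis .
    qed
  qed
qed

theorem lemma9:
  fixes A :: "real^'d^'d" and lmin lmax nu :: real
  assumes "transpose A = A" and "pos_def A"
    and "0 < lmin" and "lmin \<le> lmax"
    and "\<forall>l. is_eigenvalue A l \<longrightarrow> l \<in> {lmin..lmax}"
    and "nu > 0"
  shows "\<forall>(beta::nat) (m::nat). \<exists>C::real. \<forall>r::real^'d.
           \<bar>(deriv ^^ m) (\<lambda>v. matern A v r) nu\<bar> \<le> C / (1 + norm r ^ (2 * beta))"
proof (intro allI)
  fix beta m :: nat
  obtain B k where B: "B \<ge> 0" "\<And>r. \<bar>(deriv ^^ m) (\<lambda>v. matern A v r) nu\<bar> \<le> B * exp (- k * norm r)"
    and k: "k > 0"
    using higher_deriv_matern_le_exp_norm[OF assms(2,6)] by blast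
  define D where "D = 1 + (real (2 * beta) / k) ^ (2 * beta)"
  have "\<bar>(deriv ^^ m) (\<lambda>v. matern A v r) nu\<bar> \<le> B * D / (1 + norm r ^ (2 * beta))" for r
  proof -
    have "\<bar>(deriv ^^ m) (\<lambda>v. matern A v r) nu\<bar> \<le> B * exp (- k * norm r)"
      by (rule B(2))
    also have "\<dots> \<le> B * (D / (1 + norm r ^ (2 * beta)))"
      unfolding D_def using k B(1) by (intro mult_left_mono exp_neg_le_poly_decay) simp_all
    finally show ?thesis
      by simp
  qed
  then show "\<exists>C. \<forall>r. \<bar>(deriv ^^ m) (\<lambda>v. matern A v r) nu\<bar> \<le> C / (1 + norm r ^ (2 * beta))"
    by blast
qed

end
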